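(* Let $\mu$ be strict with $\mu_1>1$ and set $k=\mu_1-1$. Then $$|\mathrm{Av}_n(\mu)\setminus D_n(\mu)|\ll\begin{cases}\sigma_0(n)& k=2,\\ \sigma_{k-2}(n)\log^{k-1}n& k\ge3.\end{cases}$$
   Context: A partition is a weakly decreasing sequence of nonnegative integers with finitely many nonzero parts, identified with its Ferrers board. $\alpha$ contains $\mu$ if one can delete some rows and some columns of the Ferrers board of $\alpha$ so that after top/left-justifying one obtains $\mu$; otherwise $\alpha$ avoids $\mu$. $\mathrm{Av}_n(\mu)$ is the set of partitions of weight $n$ avoiding $\mu$. Strict: positive parts distinct. For strict $\mu$, $D_n(\mu)$ is the set of partitions in $\mathrm{Av}_n(\mu)$ (for $n>0$) with exactly $\mu_1-1$ distinct positive part sizes. $\sigma_i(n)=\sum_{d\mid n}d^i$. $f\ll g$ means $f=O(g)$, with implied constants possibly depending on $\mu$. *)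

theory Defs
  imports Complex_Main "HOL-Library.Landau_Symbols"
begin

definition is_partition :: "nat list \<Rightarrow> bool" where
  "is_partition \<alpha> \<longleftrightarrow> sorted_wrt (\<ge>) \<alpha> \<and> (\<forall>x\<in>set \<alpha>. 0 < x)"

definition strict_partition :: "nat list \<Rightarrow> bool" where
  "strict_partition \<mu> \<longleftrightarrow> is_partition \<mu> \<and> distinct \<mu>"

text \<open>Ferrers board containment: keep a set R of rows and a set C of columns of the board of
  alpha (cell (i,j) present iff j < alpha!i); the kept row i then has
  card {j in C. j < alpha!i} cells; top/left-justifying (dropping empty rows) must give mu.\<close>
definition contains :: "nat list \<Rightarrow> nat list \<Rightarrow> bool" where
  "contains \<alpha> \<mu> \<longleftrightarrow> (\<exists>R C. R \<subseteq> {..<length \<alpha>} \<and> finite (C :: nat set) \<and>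
      filter (\<lambda>x. 0 < x) (map (\<lambda>i. card {j\<in>C. j < \<alpha> ! i}) (sorted_list_of_set R)) = \<mu>)"

definition Av :: "nat \<Rightarrow> nat list \<Rightarrow> nat list set" where
  "Av n \<mu> = {\<alpha>. is_partition \<alpha> \<and> sum_list \<alpha> = n \<and> \<not> contains \<alpha> \<mu>}"

definition D :: "nat \<Rightarrow> nat list \<Rightarrow> nat list set" where
  "D n \<mu> = {\<alpha>\<in>Av n \<mu>. 0 < n \<and> card (set \<alpha>) = hd \<mu> - 1}"

definition sigma :: "nat \<Rightarrow> nat \<Rightarrow> real" where
  "sigma i n = (\<Sum>d\<in>{d. d dvd n}. real d ^ i)"

end

theory Submission
  imports Defs "HOL-Library.Multiset" "HOL-Analysis.Harmonic_Numbers"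
begin

(*
  A partition with at least mu_1 distinct part sizes contains mu: keep one row of each of
  m = mu_1 distinct sizes u_1 < ... < u_m and the columns u_i - 1; the row of size u_i then has
  length i, and the rows of lengths mu_1 > mu_2 > ... form mu.  Hence a partition in
  Av_n(mu) - D_n(mu) has r <= k - 1 distinct part sizes, and listing them with their multiplicities
  encodes it injectively as a solution of a_1 x_1 + ... + a_r x_r = n in positive integers.
  There are at most d(n) solutions for r = 1.  For r = 2 one may assume a_i <= x_i, and counting
  the points on the lines a x + b y = n gives O(sigma_1(n) log^2 n).  For r >= 3, summing over the
  first pair (a_1, x_1) gives O(n^(r-1) log^r n); the case r = 3 needs the average of sigma_(-1)
  over the shifts n - a_1 x_1 to be O(1).
*)

section \<open>Harmonic sums and congruence counts\<close>

lemma harm_eq_sum_divide: "(harm n :: real) = (\<Sum>k\<in>{1..n}. 1 / real k)"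
  by (simp add: harm_def inverse_eq_divide)

lemma harm_le_1_plus_ln: "(harm n :: real) \<le> 1 + ln (real n)"
proof (induction n)
  case (Suc n)
  show ?case
  proof (cases "n = 0")
    case False
    hence "ln (real n / real (Suc n)) \<le> real n / real (Suc n) - 1"
      by (intro ln_le_minus_one) simp
    hence "ln (real n) - ln (real (Suc n)) \<le> - 1 / real (Suc n)"
      using False by (simp add: ln_div field_simps)
    thus ?thesis using Suc.IH by (simp add: harm_Suc inverse_eq_divide)
  qed (simp add: harm_def)
qed (simp add: harm_def)

lemma sum_multiples_reindex:
  fixes f :: "nat \<Rightarrow> real"
  assumes "e > 0"
  shows "(\<Sum>a\<in>{1..N}. if e dvd a then f a else 0) = (\<Sum>t\<in>{1..N div e}. f (e * t))"
proof -
  have "{a\<in>{1..N}. e dvd a} = (\<lambda>t. e * t) ` {1..N div e}"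
  proof (intro set_eqI iffI)
    fix a assume "a \<in> {a\<in>{1..N}. e dvd a}"
    then obtain t where t: "a = e * t" "1 \<le> e * t" "e * t \<le> N" by auto
    have "t \<le> N div e" using t assms by (metis div_le_mono nonzero_mult_div_cancel_left not_gr0)
    moreover have "t \<ge> 1" using t by (cases t) auto
    ultimately show "a \<in> (\<lambda>t. e * t) ` {1..N div e}" using t by auto
  next
    fix a assume "a \<in> (\<lambda>t. e * t) ` {1..N div e}"
    then obtain t where "t \<in> {1..N div e}" "a = e * t" by blast
    hence t: "a = e * t" "1 \<le> t" "t \<le> N div e" by auto
    have "e * t \<le> e * (N div e)" using t by simp
    also have "\<dots> \<le> N" by simp
    finally show "a \<in> {a\<in>{1..N}. e dvd a}" using t assms by auto
  qed
  hence "(\<Sum>a\<in>{1..N}. if e dvd a then f a else 0) = sum f ((\<lambda>t. e * t) ` {1..N div e})"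
    by (simp add: sum.inter_filter[symmetric])
  also have "\<dots> = (\<Sum>t\<in>{1..N div e}. f (e * t))"
    using assms by (subst sum.reindex) (auto simp: inj_on_def)
  finally show ?thesis .
qed

lemma sum_inverse_multiples_le:
  assumes "e > 0"
  shows "(\<Sum>a\<in>{1..N}. if e dvd a then 1 / real a else 0) \<le> harm N / real e"
proof -
  have "(\<Sum>a\<in>{1..N}. if e dvd a then 1 / real a else 0) = (\<Sum>t\<in>{1..N div e}. 1 / real (e * t))"
    using sum_multiples_reindex[OF assms, of "\<lambda>a. 1 / real a"] by simp
  also have "\<dots> = harm (N div e) / real e"
    by (simp add: harm_eq_sum_divide sum_divide_distrib mult.commute)
  also have "\<dots> \<le> harm N / real e" using assms by (intro divide_right_mono harm_mono) auto
  finally show ?thesis .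
qed

lemma sum_inverse_squares_le_2: "(\<Sum>t\<in>{1..N}. 1 / real t ^ 2) \<le> 2"
proof -
  have "(\<Sum>t\<in>{1..N}. 1 / real t ^ 2) \<le> 2 - 1 / real (max 1 N)"
  proof (induction N)
    case (Suc N)
    show ?case
    proof (cases "N = 0")
      case False
      have "1 / real (Suc N) ^ 2 \<le> 1 / (real N * real (Suc N))"
        using False by (intro divide_left_mono) (auto simp: power2_eq_square)
      also have "\<dots> = 1 / real N - 1 / real (Suc N)" using False by (simp add: field_simps)
      finally show ?thesis using Suc.IH False by (simp add: max_def)
    qed simp
  qed simp
  also have "\<dots> \<le> 2" by simp
  finally show ?thesis .
qed

lemma sum_inverse_square_multiples_le:
  assumes "e > 0"
  shows "(\<Sum>g\<in>{1..N}. if e dvd g then 1 / real g ^ 2 else 0) \<le> 2 / real e ^ 2"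
proof -
  have "(\<Sum>g\<in>{1..N}. if e dvd g then 1 / real g ^ 2 else 0) = (\<Sum>t\<in>{1..N div e}. 1 / real (e * t) ^ 2)"
    using sum_multiples_reindex[OF assms, of "\<lambda>a. 1 / real a ^ 2"] by simp
  also have "\<dots> = (\<Sum>t\<in>{1..N div e}. 1 / real t ^ 2) / real e ^ 2"
    by (simp add: sum_divide_distrib power_mult_distrib mult.commute)
  also have "\<dots> \<le> 2 / real e ^ 2" using sum_inverse_squares_le_2 by (intro divide_right_mono) auto
  finally show ?thesis .
qed

lemma mod_mult_cancel_gcd:
  fixes a b x y :: nat
  assumes "b > 0" "a * x mod b = a * y mod b"
  shows "x mod (b div gcd a b) = y mod (b div gcd a b)"
proof -
  define g where "g = gcd a b"
  have "g > 0" using assms(1) unfolding g_def by simp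
  obtain a' b' where ab: "a = g * a'" "b = g * b'" "coprime a' b'"
    using gcd_coprime_exists[of a b] \<open>g > 0\<close> unfolding g_def by (metis mult.commute neq0_conv)
  have "int (a * x) mod int b = int (a * y) mod int b"
    using assms(2) by (simp only: of_nat_mod[symmetric])
  hence "int b dvd int a * (int x - int y)" by (simp add: mod_eq_dvd_iff right_diff_distrib)
  hence "int g * int b' dvd int g * (int a' * (int x - int y))" using ab by (simp add: ac_simps)
  hence "int b' dvd int a' * (int x - int y)" using \<open>g > 0\<close> by (subst (asm) dvd_mult_cancel_left) auto
  hence "int b' dvd int x - int y"
    using ab(3) by (simp add: coprime_dvd_mult_right_iff coprime_commute)
  hence "int (x mod b') = int (y mod b')" by (simp add: of_nat_mod mod_eq_dvd_iff)
  moreover have "b div g = b'" using ab(2) \<open>g > 0\<close> by simp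
  ultimately show ?thesis unfolding g_def by simp
qed

lemma card_linear_mod_solutions_le:
  fixes a b c N :: nat
  assumes "b > 0"
  shows "real (card {x. x \<le> N \<and> a * x mod b = c mod b}) \<le> real N * gcd a b / b + 1"
proof -
  define S where "S = {x. x \<le> N \<and> a * x mod b = c mod b}"
  define b' where "b' = b div gcd a b"
  have b: "b = gcd a b * b'" unfolding b'_def by simp
  hence "b' > 0" using assms by (metis gr0I mult_0_right)
  \<comment> \<open>the solutions are congruent modulo b', so a block of b' consecutive integers holds at most one\<close>
  have "inj_on (\<lambda>x. x div b') S"
  proof (rule inj_onI)
    fix x y assume xy: "x \<in> S" "y \<in> S" "x div b' = y div b'"
    have "x mod b' = y mod b'" using xy mod_mult_cancel_gcd[OF assms] unfolding S_def b'_def by simp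
    thus "x = y" using xy(3) by (metis div_mult_mod_eq)
  qed
  hence "card S = card ((\<lambda>x. x div b') ` S)" by (simp add: card_image)
  also have "\<dots> \<le> card {..N div b'}" unfolding S_def by (intro card_mono) (auto intro: div_le_mono)
  finally have "card S \<le> N div b' + 1" by simp
  moreover have "real (N div b') \<le> real N / real b'" by (rule of_nat_div_le_of_nat)
  ultimately have "real (card S) \<le> real N / real b' + 1" by linarith
  also have "real N / real b' = real N * gcd a b / b"
  proof -
    have "real b = real (gcd a b) * real b'" using b by (metis of_nat_mult)
    thus ?thesis using assms \<open>b' > 0\<close> by (simp add: field_simps)
  qed
  finally show ?thesis unfolding S_def .
qed

section \<open>Representations as sums of products\<close>

definition pair_reps :: "nat \<Rightarrow> nat \<Rightarrow> (nat \<times> nat) list set" where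
  "pair_reps j n = {ps. length ps = j \<and> (\<forall>p\<in>set ps. 0 < fst p \<and> 0 < snd p) \<and> (\<Sum>p\<leftarrow>ps. fst p * snd p) = n}"

definition hyperbola_points :: "nat \<Rightarrow> (nat \<times> nat) set" where
  "hyperbola_points n = {(a,x). 0 < a \<and> 0 < x \<and> a*x \<le> n}"

lemma finite_pair_reps: "finite (pair_reps j n)"
proof -
  have "pair_reps j n \<subseteq> {ps. set ps \<subseteq> {0..n}\<times>{0..n} \<and> length ps = j}"
  proof
    fix ps assume ps: "ps \<in> pair_reps j n"
    have "\<forall>p\<in>set ps. p \<in> {0..n}\<times>{0..n}"
    proof
      fix p assume p: "p \<in> set ps"
      have "fst p * snd p \<in> set (map (\<lambda>p. fst p * snd p) ps)" using p by auto
      hence "fst p * snd p \<le> sum_list (map (\<lambda>p. fst p * snd p) ps)" by (intro member_le_sum_list) auto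
      hence le: "fst p * snd p \<le> n" using ps unfolding pair_reps_def by simp
      have "fst p \<le> fst p * snd p" "snd p \<le> fst p * snd p" using ps p unfolding pair_reps_def by auto
      hence "fst p \<le> n" "snd p \<le> n" using le by linarith+
      thus "p \<in> {0..n}\<times>{0..n}" by (cases p) auto
    qed
    thus "ps \<in> {ps. set ps \<subseteq> {0..n}\<times>{0..n} \<and> length ps = j}" using ps unfolding pair_reps_def by auto
  qed
  thus ?thesis using finite_lists_length_eq[of "{0..n}\<times>{0..n}" j] finite_subset by blast
qed

lemma finite_hyperbola_points: "finite (hyperbola_points n)"
proof (rule finite_subset[of _ "{0..n}\<times>{0..n}"])
  show "hyperbola_points n \<subseteq> {0..n}\<times>{0..n}"
  proof
    fix p assume "p \<in> hyperbola_points n"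
    then obtain a x where p: "p = (a,x)" "0 < a" "0 < x" "a*x \<le> n" unfolding hyperbola_points_def by auto
    have "a \<le> a*x" "x \<le> a*x" using p by auto
    hence "a \<le> n" "x \<le> n" using p(4) by linarith+
    thus "p \<in> {0..n}\<times>{0..n}" using p by auto
  qed
qed simp

lemma card_hyperbola_points_le: "real (card (hyperbola_points n)) \<le> real n * harm n"
proof -
  have eq: "hyperbola_points n = (SIGMA a:{1..n}. {1..n div a})"
  proof (intro set_eqI iffI)
    fix p assume "p \<in> hyperbola_points n"
    then obtain a b where p: "p = (a,b)" "0 < a" "0 < b" "a*b \<le> n" unfolding hyperbola_points_def by auto
    hence "a \<le> a*b" by simp
    hence "a \<le> n" using p by linarith
    moreover have "b \<le> n div a" using p by (metis div_le_mono nonzero_mult_div_cancel_left not_gr0)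
    ultimately show "p \<in> (SIGMA a:{1..n}. {1..n div a})" using p by auto
  next
    fix p assume "p \<in> (SIGMA a:{1..n}. {1..n div a})"
    then obtain a b where p: "p = (a,b)" "1 \<le> a" "1 \<le> b" "b \<le> n div a" by auto
    hence "a * b \<le> a * (n div a)" by simp
    also have "\<dots> \<le> n" by simp
    finally show "p \<in> hyperbola_points n" using p unfolding hyperbola_points_def by auto
  qed
  have "card (hyperbola_points n) = (\<Sum>a\<in>{1..n}. n div a)" unfolding eq by (subst card_SigmaI) auto
  hence "real (card (hyperbola_points n)) = (\<Sum>a\<in>{1..n}. real (n div a))" by simp
  also have "\<dots> \<le> (\<Sum>a\<in>{1..n}. real n * (1 / real a))"
  proof (rule sum_mono)
    fix a
    have "real (n div a) \<le> real n / real a" by (rule of_nat_div_le_of_nat)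
    thus "real (n div a) \<le> real n * (1 / real a)" by simp
  qed
  also have "\<dots> = real n * harm n" unfolding harm_eq_sum_divide by (simp add: sum_distrib_left)
  finally show ?thesis .
qed

lemma card_pair_reps_Suc_le:
  "real (card (pair_reps (Suc j) n)) \<le> (\<Sum>p\<in>hyperbola_points n. real (card (pair_reps j (n - fst p * snd p))))"
proof -
  have sub: "pair_reps (Suc j) n \<subseteq> (\<Union>p\<in>hyperbola_points n. (\<lambda>ps. p # ps) ` pair_reps j (n - fst p * snd p))"
  proof
    fix ps assume ps: "ps \<in> pair_reps (Suc j) n"
    then obtain p qs where pq: "ps = p # qs" unfolding pair_reps_def by (cases ps) auto
    have h: "length qs = j" "0 < fst p" "0 < snd p" "\<forall>q\<in>set qs. 0 < fst q \<and> 0 < snd q"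
      "fst p * snd p + (\<Sum>q\<leftarrow>qs. fst q * snd q) = n"
      using ps pq unfolding pair_reps_def by auto
    have "p \<in> hyperbola_points n" using h unfolding hyperbola_points_def by (cases p) auto
    moreover have "qs \<in> pair_reps j (n - fst p * snd p)" using h unfolding pair_reps_def by auto
    ultimately show "ps \<in> (\<Union>p\<in>hyperbola_points n. (\<lambda>ps. p # ps) ` pair_reps j (n - fst p * snd p))"
      using pq by blast
  qed
  have "card (pair_reps (Suc j) n) \<le> card (\<Union>p\<in>hyperbola_points n. (\<lambda>ps. p # ps) ` pair_reps j (n - fst p * snd p))"
    by (rule card_mono[OF _ sub]) (auto intro: finite_hyperbola_points finite_pair_reps)
  also have "\<dots> \<le> (\<Sum>p\<in>hyperbola_points n. card ((\<lambda>ps. p # ps) ` pair_reps j (n - fst p * snd p)))"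
    by (rule card_UN_le[OF finite_hyperbola_points])
  also have "\<dots> \<le> (\<Sum>p\<in>hyperbola_points n. card (pair_reps j (n - fst p * snd p)))"
    by (intro sum_mono card_image_le finite_pair_reps)
  finally show ?thesis by (metis of_nat_le_iff of_nat_sum)
qed

lemma card_pair_reps_1_le: 
  assumes "n > 0" shows "card (pair_reps 1 n) \<le> card {d. d dvd n}"
proof -
  have "pair_reps 1 n \<subseteq> (\<lambda>d. [(d, n div d)]) ` {d. d dvd n}"
  proof
    fix ps assume ps: "ps \<in> pair_reps 1 n"
    then obtain p where p: "ps = [p]" unfolding pair_reps_def by (auto simp: length_Suc_conv)
    hence "fst p * snd p = n" "0 < fst p" using ps unfolding pair_reps_def by auto
    hence "fst p dvd n" "snd p = n div fst p" by auto
    thus "ps \<in> (\<lambda>d. [(d, n div d)]) ` {d. d dvd n}" using p by (cases p) auto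
  qed
  hence "card (pair_reps 1 n) \<le> card ((\<lambda>d. [(d, n div d)]) ` {d. d dvd n})"
    using assms by (intro card_mono) auto
  also have "\<dots> \<le> card {d. d dvd n}" by (rule card_image_le) (use assms in auto)
  finally show ?thesis .
qed

lemma pair_reps_0: "n > 0 \<Longrightarrow> pair_reps 0 n = {}"
  unfolding pair_reps_def by auto

lemma pair_reps_at_0: "r > 0 \<Longrightarrow> pair_reps r 0 = {}"
  unfolding pair_reps_def by (cases r) (auto simp: length_Suc_conv)

definition gcd_weight :: "nat \<Rightarrow> nat \<Rightarrow> nat \<Rightarrow> real" where
  "gcd_weight n a b = (if gcd a b dvd n then real (gcd a b) / (real a * real b) else 0)"

lemma gcd_weight_nonneg: "0 \<le> gcd_weight n a b"
  unfolding gcd_weight_def by simp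

definition div_count :: "nat \<Rightarrow> nat \<Rightarrow> real" where
  "div_count N m = (\<Sum>e\<in>{1..N}. if e dvd m then 1 else 0)"

definition div_recip_sum :: "nat \<Rightarrow> nat \<Rightarrow> real" where
  "div_recip_sum N m = (\<Sum>g\<in>{1..N}. if g dvd m then 1 / real g else 0)"

definition line_points :: "nat \<Rightarrow> nat \<Rightarrow> nat \<Rightarrow> (nat \<times> nat) set" where
  "line_points a b n = {(x, y). 0 < x \<and> 0 < y \<and> a * x + b * y = n}"

lemma card_line_points_le:
  assumes "a > 0" "b > 0"
  shows "real (card (line_points a b n)) \<le> real n * gcd_weight n a b + 1"
proof (cases "gcd a b dvd n")
  case False
  have "line_points a b n = {}"
  proof (rule ccontr)
    assume "line_points a b n \<noteq> {}"
    then obtain x y where "a * x + b * y = n" unfolding line_points_def by auto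
    hence "gcd a b dvd n" by (metis dvd_add gcd_dvd1 gcd_dvd2 dvd_mult2)
    thus False using False by simp
  qed
  thus ?thesis by (simp add: gcd_weight_def)
next
  case True
  define X where "X = {x. x \<le> n div a \<and> a * x mod b = n mod b}"
  \<comment> \<open>a solution is determined by x, which solves a x \<equiv> n (mod b) and satisfies x \<le> n / a\<close>
  have "inj_on fst (line_points a b n)"
  proof (rule inj_onI)
    fix p q assume pq: "p \<in> line_points a b n" "q \<in> line_points a b n" "fst p = fst q"
    obtain x y where p: "p = (x, y)" "a * x + b * y = n" using pq(1) unfolding line_points_def by auto
    obtain x' y' where q: "q = (x', y')" "a * x' + b * y' = n" using pq(2) unfolding line_points_def by auto
    have "x = x'" using p q pq(3) by simp
    hence "b * y = b * y'" using p(2) q(2) by (metis add_left_cancel)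
    thus "p = q" using p q \<open>x = x'\<close> assms(2) by simp
  qed
  moreover have "fst ` line_points a b n \<subseteq> X"
  proof
    fix x assume "x \<in> fst ` line_points a b n"
    then obtain y where xy: "a * x + b * y = n" unfolding line_points_def by force
    hence "x * a \<le> n" by (simp add: mult.commute)
    hence "x \<le> n div a" using assms(1) by (simp add: less_eq_div_iff_mult_less_eq)
    moreover have "a * x mod b = n mod b" using xy mod_mult_self2[of "a * x" b y] by simp
    ultimately show "x \<in> X" unfolding X_def by simp
  qed
  moreover have "finite X" unfolding X_def by simp
  ultimately have "card (line_points a b n) \<le> card X"
    by (metis card_image card_mono)
  hence "real (card (line_points a b n)) \<le> real (n div a) * gcd a b / b + 1"
    using card_linear_mod_solutions_le[OF assms(2), of "n div a" a n] unfolding X_def by linarith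
  also have "real (n div a) * gcd a b / b \<le> (real n / a) * gcd a b / b"
    by (intro divide_right_mono mult_right_mono of_nat_div_le_of_nat) auto
  finally show ?thesis using True by (simp add: gcd_weight_def)
qed

lemma finite_line_points:
  assumes "0 < a" "0 < b"
  shows "finite (line_points a b n)"
proof (rule finite_subset[of _ "{..n} \<times> {..n}"])
  show "line_points a b n \<subseteq> {..n} \<times> {..n}"
  proof
    fix p assume "p \<in> line_points a b n"
    then obtain x y where p: "p = (x, y)" "a * x + b * y = n" unfolding line_points_def by auto
    have "x \<le> a * x" "y \<le> b * y" using assms by simp_all
    hence "x \<le> n" "y \<le> n" using p(2) by linarith+
    thus "p \<in> {..n} \<times> {..n}" using p(1) by auto
  qed
qed simp

definition ordered_pair_reps2 :: "nat \<Rightarrow> (nat \<times> nat) list set" where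
  "ordered_pair_reps2 n = {ps \<in> pair_reps 2 n. \<forall>p\<in>set ps. fst p \<le> snd p}"

lemma card_pair_reps_2_le_ordered: "card (pair_reps 2 n) \<le> 4 * card (ordered_pair_reps2 n)"
proof -
  define F :: "(nat \<times> nat \<Rightarrow> nat \<times> nat) set" where "F = {id, prod.swap}"
  define T where "T = ordered_pair_reps2 n"
  define h :: "(nat \<times> nat \<Rightarrow> nat \<times> nat) \<times> (nat \<times> nat \<Rightarrow> nat \<times> nat) \<times> (nat \<times> nat) list \<Rightarrow> (nat \<times> nat) list"
    where "h = (\<lambda>(f, g, ps). [f (ps ! 0), g (ps ! 1)])"
  have "pair_reps 2 n \<subseteq> h ` (F \<times> F \<times> T)"
  proof
    fix ps assume ps: "ps \<in> pair_reps 2 n"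
    then obtain p q where pq: "ps = [p, q]" unfolding pair_reps_def by (auto simp: numeral_2_eq_2 length_Suc_conv)
    define f :: "nat \<times> nat \<Rightarrow> nat \<times> nat" where "f = (if fst p \<le> snd p then id else prod.swap)"
    define g :: "nat \<times> nat \<Rightarrow> nat \<times> nat" where "g = (if fst q \<le> snd q then id else prod.swap)"
    have "[f p, g q] \<in> T"
      using ps pq unfolding T_def ordered_pair_reps2_def pair_reps_def f_def g_def prod.swap_def by auto
    moreover have "ps = h (f, g, [f p, g q])" "f \<in> F" "g \<in> F"
      unfolding pq h_def f_def g_def F_def prod.swap_def by auto
    ultimately show "ps \<in> h ` (F \<times> F \<times> T)" by blast
  qed
  moreover have "finite T" unfolding T_def ordered_pair_reps2_def using finite_pair_reps by simp
  moreover have "finite F" unfolding F_def by simp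
  ultimately have "card (pair_reps 2 n) \<le> card (h ` (F \<times> F \<times> T))" by (intro card_mono) auto
  also have "\<dots> \<le> card (F \<times> F \<times> T)" by (rule card_image_le) (simp add: \<open>finite F\<close> \<open>finite T\<close>)
  also have "\<dots> = card F * card F * card T" by (simp add: card_cartesian_product)
  also have "card F \<le> 2" unfolding F_def by (simp add: card_insert_le_m1)
  finally show ?thesis unfolding T_def by (simp add: mult_le_mono)
qed

definition sqrt_range :: "nat \<Rightarrow> nat set" where
  "sqrt_range n = {a. 0 < a \<and> a * a \<le> n}"

lemma sqrt_range_subset: "sqrt_range n \<subseteq> {1..n}"
  unfolding sqrt_range_def by (auto intro: order_trans[OF le_square])

lemma card_sqrt_range_squared_le: "card (sqrt_range n) * card (sqrt_range n) \<le> n"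
proof (cases "sqrt_range n = {}")
  case False
  have fin: "finite (sqrt_range n)" using sqrt_range_subset finite_subset by blast
  define M where "M = Max (sqrt_range n)"
  have M: "M \<in> sqrt_range n" unfolding M_def using False fin by simp
  have "sqrt_range n \<subseteq> {1..M}" unfolding M_def using fin by (auto simp: sqrt_range_def)
  hence "card (sqrt_range n) \<le> M" using card_mono[of "{1..M}"] by fastforce
  hence "card (sqrt_range n) * card (sqrt_range n) \<le> M * M" by (intro mult_le_mono)
  also have "\<dots> \<le> n" using M unfolding sqrt_range_def by simp
  finally show ?thesis .
qed simp

lemma ordered_pair_reps2_subset:
  "ordered_pair_reps2 n \<subseteq> (\<Union>a\<in>sqrt_range n. \<Union>b\<in>sqrt_range n. (\<lambda>(x, y). [(a, x), (b, y)]) ` line_points a b n)"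
proof
  fix ps assume ps: "ps \<in> ordered_pair_reps2 n"
  then obtain a x b y where ps_eq: "ps = [(a, x), (b, y)]"
    unfolding ordered_pair_reps2_def pair_reps_def by (auto simp: numeral_2_eq_2 length_Suc_conv)
  have h: "0 < a" "0 < x" "0 < b" "0 < y" "a \<le> x" "b \<le> y" "a * x + b * y = n"
    using ps unfolding ps_eq ordered_pair_reps2_def pair_reps_def by auto
  have "a * a \<le> a * x" "b * b \<le> b * y" using h by auto
  hence "a * a \<le> n" "b * b \<le> n" using h(7) by linarith+
  hence "a \<in> sqrt_range n" "b \<in> sqrt_range n" using h unfolding sqrt_range_def by auto
  moreover have "(x, y) \<in> line_points a b n" using h unfolding line_points_def by auto
  ultimately show "ps \<in> (\<Union>a\<in>sqrt_range n. \<Union>b\<in>sqrt_range n. (\<lambda>(x, y). [(a, x), (b, y)]) ` line_points a b n)"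
    unfolding ps_eq by force
qed

lemma card_ordered_pair_reps2_le:
  "real (card (ordered_pair_reps2 n)) \<le> real n * (\<Sum>a\<in>{1..n}. \<Sum>b\<in>{1..n}. gcd_weight n a b) + real n"
proof -
  define A where "A = sqrt_range n"
  have A: "finite A" "A \<subseteq> {1..n}" using sqrt_range_subset finite_subset unfolding A_def by blast+
  have finL: "finite (line_points a b n)" if "a \<in> A" "b \<in> A" for a b
    using that A(2) by (intro finite_line_points) auto
  have "card (ordered_pair_reps2 n) \<le> (\<Sum>a\<in>A. \<Sum>b\<in>A. card (line_points a b n))"
  proof -
    have "card (ordered_pair_reps2 n) \<le> card (\<Union>a\<in>A. \<Union>b\<in>A. (\<lambda>(x, y). [(a, x), (b, y)]) ` line_points a b n)"
      using A finL unfolding A_def by (intro card_mono ordered_pair_reps2_subset) auto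
    also have "\<dots> \<le> (\<Sum>a\<in>A. \<Sum>b\<in>A. card ((\<lambda>(x, y). [(a, x), (b, y)]) ` line_points a b n))"
      by (intro order_trans[OF card_UN_le] sum_mono card_UN_le A(1))
    also have "\<dots> \<le> (\<Sum>a\<in>A. \<Sum>b\<in>A. card (line_points a b n))"
      by (intro sum_mono card_image_le) (use finL in auto)
    finally show ?thesis .
  qed
  hence "real (card (ordered_pair_reps2 n)) \<le> (\<Sum>a\<in>A. \<Sum>b\<in>A. real (card (line_points a b n)))"
    by (metis (no_types, lifting) of_nat_le_iff of_nat_sum sum.cong)
  also have "\<dots> \<le> (\<Sum>a\<in>A. \<Sum>b\<in>A. real n * gcd_weight n a b + 1)"
  proof (intro sum_mono)
    fix a b assume "a \<in> A" "b \<in> A"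
    hence "a > 0" "b > 0" using A(2) by auto
    thus "real (card (line_points a b n)) \<le> real n * gcd_weight n a b + 1" by (rule card_line_points_le)
  qed
  also have "\<dots> = real n * (\<Sum>a\<in>A. \<Sum>b\<in>A. gcd_weight n a b) + real (card A * card A)"
    by (simp add: sum.distrib sum_distrib_left)
  also have "\<dots> \<le> real n * (\<Sum>a\<in>{1..n}. \<Sum>b\<in>{1..n}. gcd_weight n a b) + real n"
  proof (intro add_mono mult_left_mono)
    have "(\<Sum>a\<in>A. \<Sum>b\<in>A. gcd_weight n a b) \<le> (\<Sum>a\<in>A. \<Sum>b\<in>{1..n}. gcd_weight n a b)"
      using A(2) by (intro sum_mono sum_mono2 gcd_weight_nonneg) auto
    also have "\<dots> \<le> (\<Sum>a\<in>{1..n}. \<Sum>b\<in>{1..n}. gcd_weight n a b)"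
      using A(2) by (intro sum_mono2 sum_nonneg gcd_weight_nonneg) auto
    finally show "(\<Sum>a\<in>A. \<Sum>b\<in>A. gcd_weight n a b) \<le> (\<Sum>a\<in>{1..n}. \<Sum>b\<in>{1..n}. gcd_weight n a b)" .
    show "real (card A * card A) \<le> real n"
      using card_sqrt_range_squared_le[of n] unfolding A_def of_nat_le_iff .
  qed simp
  finally show ?thesis .
qed

lemma gcd_weight_le_sum_common_divisors:
  assumes "a \<in> {1..n}" "b \<in> {1..n}"
  shows "gcd_weight n a b \<le> (\<Sum>g\<in>{1..n}. if g dvd n \<and> g dvd a \<and> g dvd b then real g / (real a * real b) else 0)"
proof (cases "gcd a b dvd n")
  case True
  have "gcd a b \<in> {1..n}" using assms by (auto simp: Suc_le_eq intro: le_trans[OF gcd_le1_nat])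
  with True show ?thesis unfolding gcd_weight_def
    by (intro order_trans[OF _ member_le_sum[of "gcd a b"]]) auto
qed (auto simp: gcd_weight_def intro!: sum_nonneg)

lemma sum_gcd_weight_le: "(\<Sum>a\<in>{1..n}. \<Sum>b\<in>{1..n}. gcd_weight n a b) \<le> harm n ^ 2 * div_recip_sum n n"
proof -
  define f where "f g a = (if g dvd a then 1 / real a else 0)" for g a
  have "(\<Sum>a\<in>{1..n}. \<Sum>b\<in>{1..n}. gcd_weight n a b) \<le> (\<Sum>a\<in>{1..n}. \<Sum>b\<in>{1..n}. \<Sum>g\<in>{1..n}.
      if g dvd n \<and> g dvd a \<and> g dvd b then real g / (real a * real b) else 0)"
    by (intro sum_mono gcd_weight_le_sum_common_divisors)
  also have "\<dots> = (\<Sum>a\<in>{1..n}. \<Sum>b\<in>{1..n}. \<Sum>g\<in>{1..n}. (if g dvd n then real g else 0) * (f g a * f g b))"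
    by (intro sum.cong refl) (auto simp: f_def)
  also have "\<dots> = (\<Sum>a\<in>{1..n}. \<Sum>g\<in>{1..n}. \<Sum>b\<in>{1..n}. (if g dvd n then real g else 0) * (f g a * f g b))"
    by (intro sum.cong refl sum.swap)
  also have "\<dots> = (\<Sum>g\<in>{1..n}. \<Sum>a\<in>{1..n}. \<Sum>b\<in>{1..n}. (if g dvd n then real g else 0) * (f g a * f g b))"
    by (rule sum.swap)
  also have "\<dots> = (\<Sum>g\<in>{1..n}. (if g dvd n then real g else 0) * ((\<Sum>a\<in>{1..n}. f g a) * (\<Sum>b\<in>{1..n}. f g b)))"
  proof (intro sum.cong refl)
    fix g
    show "(\<Sum>a\<in>{1..n}. \<Sum>b\<in>{1..n}. (if g dvd n then real g else 0) * (f g a * f g b))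
      = (if g dvd n then real g else 0) * ((\<Sum>a\<in>{1..n}. f g a) * (\<Sum>b\<in>{1..n}. f g b))"
      by (subst sum_product) (simp add: sum_distrib_left)
  qed
  also have "\<dots> \<le> (\<Sum>g\<in>{1..n}. (if g dvd n then real g else 0) * ((harm n / real g) * (harm n / real g)))"
    using sum_inverse_multiples_le unfolding f_def
    by (intro sum_mono mult_left_mono mult_mono) (auto intro!: sum_nonneg simp: harm_nonneg)
  also have "\<dots> = harm n ^ 2 * div_recip_sum n n"
    unfolding div_recip_sum_def by (auto simp: sum_distrib_left power2_eq_square intro!: sum.cong)
  finally show ?thesis .
qed

lemma card_pair_reps_2_le:
  "real (card (pair_reps 2 n)) \<le> 4 * (real n * harm n ^ 2 * div_recip_sum n n + real n)"
proof -
  have "real (card (pair_reps 2 n)) \<le> 4 * real (card (ordered_pair_reps2 n))"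
    using card_pair_reps_2_le_ordered[of n] by linarith
  also have "\<dots> \<le> 4 * (real n * (\<Sum>a\<in>{1..n}. \<Sum>b\<in>{1..n}. gcd_weight n a b) + real n)"
    using card_ordered_pair_reps2_le[of n] by simp
  also have "\<dots> \<le> 4 * (real n * (harm n ^ 2 * div_recip_sum n n) + real n)"
    using sum_gcd_weight_le[of n] by (intro mult_left_mono add_mono) auto
  finally show ?thesis by (simp add: mult.assoc)
qed

lemma card_pair_reps_2_le_of_le:
  assumes "m \<le> n"
  shows "real (card (pair_reps 2 m)) \<le> 4 * (real n * harm n ^ 2 * div_recip_sum n m + real n)"
proof -
  have "div_recip_sum m m \<le> div_recip_sum n m"
    unfolding div_recip_sum_def using assms by (intro sum_mono2) auto
  moreover have "harm m \<le> (harm n :: real)" using assms by (rule harm_mono)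
  moreover have "div_recip_sum m m \<ge> 0" unfolding div_recip_sum_def by (intro sum_nonneg) auto
  ultimately have "real m * harm m ^ 2 * div_recip_sum m m \<le> real n * harm n ^ 2 * div_recip_sum n m"
    using assms by (intro mult_mono power_mono) (auto simp: harm_nonneg)
  thus ?thesis using card_pair_reps_2_le[of m] assms by simp
qed

lemma sum_gcd_div_le:
  assumes "g > 0"
  shows "(\<Sum>a\<in>{1..n}. real (gcd a g) / real a) \<le> harm n * div_count n g"
proof -
  define K where "K e a = (if e dvd g \<and> e dvd a then real e / real a else 0)" for e a
  have "(\<Sum>a\<in>{1..n}. real (gcd a g) / real a) \<le> (\<Sum>a\<in>{1..n}. \<Sum>e\<in>{1..n}. K e a)"
  proof (rule sum_mono)
    fix a assume a: "a \<in> {1..n}"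
    have "gcd a g \<in> {1..n}" using a assms by (auto simp: Suc_le_eq intro: le_trans[OF gcd_le1_nat])
    hence "K (gcd a g) a \<le> (\<Sum>e\<in>{1..n}. K e a)" by (intro member_le_sum) (auto simp: K_def)
    thus "real (gcd a g) / real a \<le> (\<Sum>e\<in>{1..n}. K e a)" by (simp add: K_def)
  qed
  also have "\<dots> = (\<Sum>e\<in>{1..n}. (if e dvd g then real e else 0) * (\<Sum>a\<in>{1..n}. if e dvd a then 1 / real a else 0))"
    by (subst sum.swap) (auto simp: K_def sum_distrib_left intro!: sum.cong)
  also have "\<dots> \<le> (\<Sum>e\<in>{1..n}. (if e dvd g then real e else 0) * (harm n / real e))"
    by (intro sum_mono mult_left_mono sum_inverse_multiples_le) auto
  also have "\<dots> = harm n * div_count n g"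
    unfolding div_count_def by (simp add: sum_distrib_left) (intro sum.cong refl, auto)
  finally show ?thesis .
qed

lemma card_hyperbola_points_dvd_le:
  assumes "g > 0"
  shows "real (card {p\<in>hyperbola_points n. g dvd (n - fst p * snd p)})
    \<le> real n / real g * harm n * div_count n g + real n"
proof -
  define X where "X a = {x. x \<le> n div a \<and> a * x mod g = n mod g}" for a
  have finX: "finite (X a)" for a unfolding X_def by simp
  have "{p\<in>hyperbola_points n. g dvd (n - fst p * snd p)} \<subseteq> (\<Union>a\<in>{1..n}. (\<lambda>x. (a, x)) ` X a)"
  proof
    fix p assume p: "p \<in> {p\<in>hyperbola_points n. g dvd (n - fst p * snd p)}"
    then obtain a x where ax: "p = (a, x)" "0 < a" "0 < x" "a * x \<le> n" "g dvd (n - a * x)"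
      unfolding hyperbola_points_def by auto
    have "a \<le> a * x" using ax(3) by simp
    hence "a \<le> n" using ax(4) by linarith
    moreover have "x \<le> n div a" using ax by (simp add: less_eq_div_iff_mult_less_eq mult.commute)
    moreover have "a * x mod g = n mod g" using ax mod_eq_dvd_iff_nat[of "a * x" n g] by simp
    ultimately show "p \<in> (\<Union>a\<in>{1..n}. (\<lambda>x. (a, x)) ` X a)" using ax unfolding X_def by auto
  qed
  hence "card {p\<in>hyperbola_points n. g dvd (n - fst p * snd p)} \<le> card (\<Union>a\<in>{1..n}. (\<lambda>x. (a, x)) ` X a)"
    by (rule card_mono[rotated]) (use finX in auto)
  also have "\<dots> \<le> (\<Sum>a\<in>{1..n}. card ((\<lambda>x. (a, x)) ` X a))" by (rule card_UN_le) simp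
  also have "\<dots> \<le> (\<Sum>a\<in>{1..n}. card (X a))" by (intro sum_mono card_image_le finX)
  finally have "real (card {p\<in>hyperbola_points n. g dvd (n - fst p * snd p)}) \<le> (\<Sum>a\<in>{1..n}. real (card (X a)))"
    by (metis of_nat_le_iff of_nat_sum)
  also have "\<dots> \<le> (\<Sum>a\<in>{1..n}. real n / real g * (real (gcd a g) / real a) + 1)"
  proof (rule sum_mono)
    fix a assume a: "a \<in> {1..n}"
    have "real (card (X a)) \<le> real (n div a) * gcd a g / g + 1"
      unfolding X_def by (rule card_linear_mod_solutions_le[OF assms])
    also have "real (n div a) * gcd a g / g \<le> (real n / a) * gcd a g / g"
      by (intro divide_right_mono mult_right_mono of_nat_div_le_of_nat) auto
    finally show "real (card (X a)) \<le> real n / real g * (real (gcd a g) / real a) + 1"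
      by (simp add: mult.commute)
  qed
  also have "\<dots> = real n / real g * (\<Sum>a\<in>{1..n}. real (gcd a g) / real a) + real n"
    by (simp add: sum.distrib sum_distrib_left)
  also have "\<dots> \<le> real n / real g * (harm n * div_count n g) + real n"
    by (intro add_mono mult_left_mono sum_gcd_div_le assms) auto
  finally show ?thesis by (simp add: mult.assoc)
qed

lemma sum_div_count_div_square_le: "(\<Sum>g\<in>{1..n}. div_count n g / real g ^ 2) \<le> 4"
proof -
  have "(\<Sum>g\<in>{1..n}. div_count n g / real g ^ 2)
      = (\<Sum>e\<in>{1..n}. \<Sum>g\<in>{1..n}. if e dvd g then 1 / real g ^ 2 else 0)"
    unfolding div_count_def by (subst sum.swap) (auto simp: sum_divide_distrib intro!: sum.cong)
  also have "\<dots> \<le> (\<Sum>e\<in>{1..n}. 2 * (1 / real e ^ 2))"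
    using sum_inverse_square_multiples_le by (intro sum_mono) auto
  also have "\<dots> = 2 * (\<Sum>e\<in>{1..n}. 1 / real e ^ 2)" by (simp add: sum_distrib_left)
  also have "\<dots> \<le> 2 * 2" using sum_inverse_squares_le_2 by (intro mult_left_mono) auto
  finally show ?thesis by simp
qed

text \<open>The average of div_recip_sum over the shifts n - a x is bounded; this is what keeps three
  pairs at O(n^2 log^3 n) rather than O(n^2 log^4 n).\<close>
lemma sum_div_recip_sum_hyperbola_le:
  "(\<Sum>p\<in>hyperbola_points n. div_recip_sum n (n - fst p * snd p)) \<le> 5 * real n * harm n"
proof -
  define c where "c g = real (card {p\<in>hyperbola_points n. g dvd (n - fst p * snd p)})" for g
  have "(\<Sum>p\<in>hyperbola_points n. div_recip_sum n (n - fst p * snd p)) = (\<Sum>g\<in>{1..n}. c g * (1 / real g))"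
    unfolding div_recip_sum_def c_def
    by (subst sum.swap) (simp add: sum.inter_filter[symmetric] finite_hyperbola_points)
  also have "\<dots> \<le> (\<Sum>g\<in>{1..n}. (real n / real g * harm n * div_count n g + real n) * (1 / real g))"
    unfolding c_def by (intro sum_mono mult_right_mono card_hyperbola_points_dvd_le) auto
  also have "\<dots> = (\<Sum>g\<in>{1..n}. real n * harm n * (div_count n g / real g ^ 2) + real n * (1 / real g))"
    by (intro sum.cong refl) (auto simp: field_simps power2_eq_square)
  also have "\<dots> = real n * harm n * (\<Sum>g\<in>{1..n}. div_count n g / real g ^ 2) + real n * harm n"
    by (simp add: sum.distrib sum_distrib_left harm_eq_sum_divide)
  also have "\<dots> \<le> real n * harm n * 4 + real n * harm n"
    using sum_div_count_div_square_le by (intro add_mono mult_left_mono) (auto simp: harm_nonneg)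
  finally show ?thesis by (simp add: ac_simps)
qed

lemma harm_ge_1:
  assumes "n \<ge> 1" shows "(harm n :: real) \<ge> 1"
proof -
  have "harm 1 \<le> (harm n :: real)" using assms by (rule harm_mono)
  thus ?thesis by (simp add: harm_def)
qed

lemma card_pair_reps_3_le: "real (card (pair_reps 3 n)) \<le> 24 * real n ^ 2 * harm n ^ 3"
proof (cases "n = 0")
  case False
  hence H1: "(harm n :: real) \<ge> 1" using harm_ge_1 by simp
  have "real (card (pair_reps 3 n)) \<le> (\<Sum>p\<in>hyperbola_points n. real (card (pair_reps 2 (n - fst p * snd p))))"
    using card_pair_reps_Suc_le[of 2 n] by (simp add: numeral_3_eq_3 numeral_2_eq_2)
  also have "\<dots> \<le> (\<Sum>p\<in>hyperbola_points n. 4 * (real n * harm n ^ 2 * div_recip_sum n (n - fst p * snd p) + real n))"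
    by (intro sum_mono card_pair_reps_2_le_of_le) auto
  also have "\<dots> = 4 * real n * harm n ^ 2 * (\<Sum>p\<in>hyperbola_points n. div_recip_sum n (n - fst p * snd p))
      + 4 * real n * real (card (hyperbola_points n))"
    by (simp add: sum.distrib sum_distrib_left algebra_simps)
  also have "\<dots> \<le> 4 * real n * harm n ^ 2 * (5 * real n * harm n) + 4 * real n * (real n * harm n)"
    using sum_div_recip_sum_hyperbola_le card_hyperbola_points_le
    by (intro add_mono mult_left_mono) (auto simp: harm_nonneg)
  also have "\<dots> = 20 * real n ^ 2 * harm n ^ 3 + 4 * real n ^ 2 * harm n"
    by (simp add: power2_eq_square power3_eq_cube algebra_simps)
  also have "4 * real n ^ 2 * harm n \<le> 4 * real n ^ 2 * harm n ^ 3"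
  proof -
    have "harm n ^ 1 \<le> (harm n :: real) ^ 3" using H1 by (intro power_increasing) auto
    thus ?thesis by (intro mult_left_mono) auto
  qed
  finally show ?thesis by (simp add: ac_simps)
qed (simp add: pair_reps_at_0)

lemma card_pair_reps_le: "r \<ge> 3 \<Longrightarrow> real (card (pair_reps r n)) \<le> 24 * real n ^ (r - 1) * harm n ^ r"
proof (induction r arbitrary: n rule: nat_induct_at_least)
  case base then show ?case using card_pair_reps_3_le by simp
next
  case (Suc r)
  have "real (card (pair_reps (Suc r) n)) \<le> (\<Sum>p\<in>hyperbola_points n. real (card (pair_reps r (n - fst p * snd p))))"
    by (rule card_pair_reps_Suc_le)
  also have "\<dots> \<le> (\<Sum>p\<in>hyperbola_points n. 24 * real n ^ (r - 1) * harm n ^ r)"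
  proof (rule sum_mono)
    fix p
    have mn: "n - fst p * snd p \<le> n" by simp
    have "real (card (pair_reps r (n - fst p * snd p))) \<le> 24 * real (n - fst p * snd p) ^ (r - 1) * harm (n - fst p * snd p) ^ r"
      by (rule Suc.IH)
    also have "\<dots> \<le> 24 * real n ^ (r - 1) * harm n ^ r"
      using mn harm_mono[OF mn, where 'a = real] by (intro mult_mono power_mono) (auto simp: harm_nonneg)
    finally show "real (card (pair_reps r (n - fst p * snd p))) \<le> 24 * real n ^ (r - 1) * harm n ^ r" .
  qed
  also have "\<dots> = real (card (hyperbola_points n)) * (24 * real n ^ (r - 1) * harm n ^ r)" by simp
  also have "\<dots> \<le> (real n * harm n) * (24 * real n ^ (r - 1) * harm n ^ r)"
    using card_hyperbola_points_le by (intro mult_right_mono) (auto simp: harm_nonneg)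
  also have "\<dots> = 24 * real n ^ (Suc r - 1) * harm n ^ Suc r"
    using Suc.hyps by (cases r) (auto simp: algebra_simps)
  finally show ?case .
qed

section \<open>Partitions with few part sizes\<close>

definition multiplicity_code :: "nat list \<Rightarrow> (nat \<times> nat) list" where
  "multiplicity_code \<alpha> = map (\<lambda>s. (s, count_list \<alpha> s)) (sorted_list_of_set (set \<alpha>))"

lemma inj_on_multiplicity_code: "inj_on multiplicity_code {\<alpha>. is_partition \<alpha>}"
proof (rule inj_onI)
  fix \<alpha> \<beta> assume a: "\<alpha> \<in> {\<alpha>. is_partition \<alpha>}" and b: "\<beta> \<in> {\<alpha>. is_partition \<alpha>}"
    and eq: "multiplicity_code \<alpha> = multiplicity_code \<beta>"
  have "map fst (multiplicity_code \<alpha>) = map fst (multiplicity_code \<beta>)" using eq by simp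
  hence sl: "sorted_list_of_set (set \<alpha>) = sorted_list_of_set (set \<beta>)"
    unfolding multiplicity_code_def by (simp add: comp_def)
  hence st: "set \<alpha> = set \<beta>" by (metis List.finite_set set_sorted_list_of_set)
  have "\<forall>s\<in>set (sorted_list_of_set (set \<alpha>)). count_list \<alpha> s = count_list \<beta> s"
    using eq unfolding multiplicity_code_def sl by simp
  hence "count_list \<alpha> s = count_list \<beta> s" for s
    using st by (cases "s \<in> set \<alpha>") (simp_all add: count_list_0_iff)
  hence ms: "mset (rev \<alpha>) = mset (rev \<beta>)" by (simp add: multiset_eq_iff count_mset)
  have sa: "sorted (rev \<alpha>)" "sorted (rev \<beta>)"
    using a b unfolding is_partition_def by (simp_all add: sorted_wrt_rev)
  have "sort (rev \<beta>) = rev \<alpha>" by (rule properties_for_sort[OF ms sa(1)])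
  moreover have "sort (rev \<beta>) = rev \<beta>" by (rule properties_for_sort[OF refl sa(2)])
  ultimately show "\<alpha> = \<beta>" by simp
qed

lemma multiplicity_code_in_pair_reps:
  assumes "is_partition \<alpha>"
  shows "multiplicity_code \<alpha> \<in> pair_reps (card (set \<alpha>)) (sum_list \<alpha>)"
proof -
  have "0 < fst p \<and> 0 < snd p" if p: "p \<in> set (multiplicity_code \<alpha>)" for p
  proof -
    obtain s where s: "s \<in> set \<alpha>" "p = (s, count_list \<alpha> s)"
      using p unfolding multiplicity_code_def by auto
    have "count_list \<alpha> s \<noteq> 0" using s(1) count_list_0_iff by metis
    moreover have "0 < s" using s(1) assms unfolding is_partition_def by auto
    ultimately show ?thesis using s(2) by simp
  qed
  moreover have "(\<Sum>p\<leftarrow>multiplicity_code \<alpha>. fst p * snd p) = (\<Sum>s\<leftarrow>sorted_list_of_set (set \<alpha>). s * count_list \<alpha> s)"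
    unfolding multiplicity_code_def by (simp add: comp_def)
  moreover have "\<dots> = (\<Sum>s\<in>set \<alpha>. s * count_list \<alpha> s)"
    by (metis List.finite_set distinct_sorted_list_of_set set_sorted_list_of_set sum.distinct_set_conv_list)
  moreover have "\<dots> = sum_list \<alpha>"
    using sum_list_map_eq_sum_count[of "\<lambda>x. x" \<alpha>] by (simp add: mult.commute)
  ultimately show ?thesis unfolding pair_reps_def multiplicity_code_def by simp
qed

lemma bij_betw_rank:
  fixes U :: "'a :: linorder set"
  assumes "finite U"
  shows "bij_betw (\<lambda>s. card {u\<in>U. u \<le> s}) U {1..card U}"
proof -
  define rk where "rk s = card {u\<in>U. u \<le> s}" for s
  have "rk s < rk s'" if "s \<in> U" "s' \<in> U" "s < s'" for s s'
  proof -
    have "s' \<in> {u\<in>U. u \<le> s'} - {u\<in>U. u \<le> s}" using that by auto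
    hence "{u\<in>U. u \<le> s} \<subset> {u\<in>U. u \<le> s'}" using that by auto
    thus ?thesis unfolding rk_def using assms by (intro psubset_card_mono) auto
  qed
  hence "inj_on rk U" by (metis inj_onI linorder_neqE not_less_iff_gr_or_eq)
  moreover have "rk ` U \<subseteq> {1..card U}"
  proof
    fix y assume "y \<in> rk ` U"
    then obtain s where s: "s \<in> U" "y = rk s" by blast
    have "card {u\<in>U. u \<le> s} > 0" using s(1) assms by (subst card_gt_0_iff) auto
    moreover have "card {u\<in>U. u \<le> s} \<le> card U" using assms by (intro card_mono) auto
    ultimately show "y \<in> {1..card U}" using s unfolding rk_def by auto
  qed
  ultimately have "rk ` U = {1..card U}" by (intro card_subset_eq) (auto simp: card_image)
  with \<open>inj_on rk U\<close> show ?thesis unfolding rk_def bij_betw_def by blast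
qed

lemma card_less_image_pred:
  assumes "\<forall>u\<in>U. 0 < (u :: nat)"
  shows "card {j\<in>(\<lambda>u. u - 1) ` U. j < s} = card {u\<in>U. u \<le> s}"
proof -
  have "{j\<in>(\<lambda>u. u - 1) ` U. j < s} = (\<lambda>u. u - 1) ` {u\<in>U. u \<le> s}"
    using assms by force
  moreover have "inj_on (\<lambda>u. u - 1) {u\<in>U. u \<le> s}"
  proof (rule inj_onI)
    fix x y assume "x \<in> {u\<in>U. u \<le> s}" "y \<in> {u\<in>U. u \<le> s}" "x - 1 = y - 1"
    moreover from this(1,2) have "0 < x" "0 < y" using assms by auto
    ultimately show "x = y" by linarith
  qed
  ultimately show ?thesis by (simp add: card_image)
qed

lemma contains_if_row_lengths:
  fixes \<alpha> \<mu> :: "nat list" and C :: "nat set"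
  defines "v \<equiv> \<lambda>i. card {j\<in>C. j < \<alpha> ! i}"
  assumes \<alpha>: "is_partition \<alpha>" and \<mu>: "strict_partition \<mu>"
    and R: "R \<subseteq> {..<length \<alpha>}" and C: "finite C"
    and inj: "inj_on v R" and img: "v ` R = set \<mu>"
  shows "contains \<alpha> \<mu>"
proof -
  define L where "L = map v (sorted_list_of_set R)"
  have finR: "finite R" using R finite_subset by blast
  have "sorted_wrt (\<lambda>i j. v i \<ge> v j) (sorted_list_of_set R)"
  proof (rule sorted_wrt_mono_rel[where P = "(<)"])
    fix i j assume ij: "i \<in> set (sorted_list_of_set R)" "j \<in> set (sorted_list_of_set R)" "i < j"
    hence "\<alpha> ! i \<ge> \<alpha> ! j" using \<alpha> R finR unfolding is_partition_def by (auto dest: sorted_wrt_nth_less)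
    thus "v i \<ge> v j" unfolding v_def using C by (intro card_mono) auto
  qed (use finR in simp)
  hence "sorted_wrt (\<ge>) L" unfolding L_def by (simp add: sorted_wrt_map)
  moreover have "distinct L" "set L = set \<mu>" unfolding L_def using finR inj img by (simp_all add: distinct_map)
  ultimately have "rev L = rev \<mu>"
    using \<mu> unfolding strict_partition_def is_partition_def
    by (intro sorted_distinct_set_unique) (simp_all add: sorted_wrt_rev)
  moreover have "filter (\<lambda>x. 0 < x) \<mu> = \<mu>"
    using \<mu> unfolding strict_partition_def is_partition_def by (simp add: filter_id_conv)
  ultimately have "filter (\<lambda>x. 0 < x) (map v (sorted_list_of_set R)) = \<mu>" unfolding L_def by simp
  thus ?thesis unfolding contains_def v_def using R C by blast
qed

lemma contains_if_card_set_ge: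
  assumes \<alpha>: "is_partition \<alpha>" and \<mu>: "strict_partition \<mu>" "\<mu> \<noteq> []"
    and card: "hd \<mu> \<le> card (set \<alpha>)"
  shows "contains \<alpha> \<mu>"
proof -
  obtain U where U: "U \<subseteq> set \<alpha>" "card U = hd \<mu>"
    using obtain_subset_with_card_n[OF card] by blast
  have fin: "finite U" using U(1) finite_subset by blast
  have pos: "\<forall>u\<in>U. 0 < u" using U(1) \<alpha> unfolding is_partition_def by auto
  define C where "C = (\<lambda>u. u - 1) ` U"
  define v where "v = (\<lambda>i. card {j\<in>C. j < \<alpha> ! i})"
  have "set \<mu> \<subseteq> {1..hd \<mu>}"
    using \<mu> unfolding strict_partition_def is_partition_def by (cases \<mu>) (auto simp: Suc_le_eq)
  also have "\<dots> = (\<lambda>s. card {u\<in>U. u \<le> s}) ` U"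
    using bij_betw_rank[OF fin] U(2) by (simp add: bij_betw_def)
  finally have ranks: "set \<mu> \<subseteq> (\<lambda>s. card {u\<in>U. u \<le> s}) ` U" .
  have "\<exists>i. i < length \<alpha> \<and> v i = p" if p: "p \<in> set \<mu>" for p
  proof -
    obtain u where u: "u \<in> U" "p = card {u'\<in>U. u' \<le> u}" using p ranks by blast
    then obtain i where i: "i < length \<alpha>" "\<alpha> ! i = u" using U(1) by (metis in_set_conv_nth subsetD)
    have "v i = p" unfolding v_def C_def card_less_image_pred[OF pos] using i(2) u(2) by simp
    with i(1) show ?thesis by blast
  qed
  then obtain ix where ix: "\<And>p. p \<in> set \<mu> \<Longrightarrow> ix p < length \<alpha> \<and> v (ix p) = p" by metis
  have inj: "inj_on v (ix ` set \<mu>)" by (rule inj_on_inverseI[of _ ix]) (auto simp: ix)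
  have "v ` ix ` set \<mu> = (\<lambda>p. p) ` set \<mu>" unfolding image_image by (rule image_cong) (simp_all add: ix)
  hence img: "v ` ix ` set \<mu> = set \<mu>" by simp
  have R: "ix ` set \<mu> \<subseteq> {..<length \<alpha>}" using ix by auto
  have "finite C" using fin unfolding C_def by simp
  from contains_if_row_lengths[OF \<alpha> \<mu>(1) R this] inj img show ?thesis unfolding v_def by simp
qed

lemma card_Av_diff_D_le:
  assumes \<mu>: "strict_partition \<mu>" "\<mu> \<noteq> []" and "n > 0"
  shows "card (Av n \<mu> - D n \<mu>) \<le> (\<Sum>r\<le>hd \<mu> - 2. card (pair_reps r n))"
proof -
  have "multiplicity_code ` (Av n \<mu> - D n \<mu>) \<subseteq> (\<Union>r\<le>hd \<mu> - 2. pair_reps r n)"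
  proof
    fix y assume "y \<in> multiplicity_code ` (Av n \<mu> - D n \<mu>)"
    then obtain \<alpha> where a: "\<alpha> \<in> Av n \<mu>" "\<alpha> \<notin> D n \<mu>" "y = multiplicity_code \<alpha>" by auto
    hence \<alpha>: "is_partition \<alpha>" "sum_list \<alpha> = n" "\<not> contains \<alpha> \<mu>" unfolding Av_def by auto
    have "card (set \<alpha>) < hd \<mu>" using contains_if_card_set_ge[OF \<alpha>(1) \<mu>] \<alpha>(3) by linarith
    moreover have "card (set \<alpha>) \<noteq> hd \<mu> - 1" using a \<open>n > 0\<close> unfolding D_def by auto
    moreover have "y \<in> pair_reps (card (set \<alpha>)) n" using multiplicity_code_in_pair_reps[OF \<alpha>(1)] \<alpha>(2) a(3) by simp
    ultimately show "y \<in> (\<Union>r\<le>hd \<mu> - 2. pair_reps r n)" by (auto intro!: bexI[of _ "card (set \<alpha>)"])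
  qed
  moreover have "inj_on multiplicity_code (Av n \<mu> - D n \<mu>)"
    by (rule inj_on_subset[OF inj_on_multiplicity_code]) (auto simp: Av_def)
  ultimately have "card (Av n \<mu> - D n \<mu>) \<le> card (\<Union>r\<le>hd \<mu> - 2. pair_reps r n)"
    by (intro card_inj_on_le) (auto intro: finite_pair_reps)
  also have "\<dots> \<le> (\<Sum>r\<le>hd \<mu> - 2. card (pair_reps r n))" by (rule card_UN_le) simp
  finally show ?thesis .
qed

section \<open>Divisor sums and the final estimate\<close>

lemma power_le_sigma: "n > 0 \<Longrightarrow> real n ^ i \<le> sigma i n"
  unfolding sigma_def by (intro member_le_sum) auto

lemma sigma_mono:
  assumes "n > 0" "i \<le> i'"
  shows "sigma i n \<le> sigma i' n"
  unfolding sigma_def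
proof (rule sum_mono)
  fix d assume "d \<in> {d. d dvd n}"
  hence "d > 0" using assms by (auto intro: dvd_pos_nat)
  thus "real d ^ i \<le> real d ^ i'" using assms by (intro power_increasing) auto
qed

lemma sigma_nonneg: "0 \<le> sigma i n"
  unfolding sigma_def by (intro sum_nonneg) simp

lemma sigma_0_eq_card: "sigma 0 n = real (card {d. d dvd n})"
  unfolding sigma_def by simp

lemma div_recip_sum_eq_sigma_1:
  assumes "n > 0"
  shows "real n * div_recip_sum n n = sigma 1 n"
proof -
  have "{g\<in>{1..n}. g dvd n} = {d. d dvd n}"
    using assms by (auto simp: Suc_le_eq dvd_imp_le intro: dvd_pos_nat)
  hence "real n * div_recip_sum n n = (\<Sum>g\<in>{d. d dvd n}. real n / real g)"
    unfolding div_recip_sum_def by (simp add: sum.inter_filter[symmetric] sum_distrib_left)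
  also have "\<dots> = (\<Sum>g\<in>{d. d dvd n}. real (n div g))"
    by (intro sum.cong refl) (auto simp: real_of_nat_div)
  also have "\<dots> = (\<Sum>d\<in>{d. d dvd n}. real d)"
    by (rule sum.reindex_bij_witness[of _ "\<lambda>d. n div d" "\<lambda>d. n div d"])
       (use assms in \<open>auto simp: div_div_eq_right dvd_div_eq_mult intro: dvd_div_mult_self\<close>)
  finally show ?thesis unfolding sigma_def by simp
qed

lemma one_le_ln_nat: "n \<ge> 3 \<Longrightarrow> 1 \<le> ln (real n)"
  using exp_le ln_ge_iff[of "real n" 1] by (simp add: order_trans)

lemma harm_le_2_ln: "n \<ge> 3 \<Longrightarrow> (harm n :: real) \<le> 2 * ln (real n)"
  using harm_le_1_plus_ln[of n] one_le_ln_nat[of n] by simp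

lemma card_pair_reps_le_sigma_0:
  assumes "n > 0" "r \<le> 1"
  shows "real (card (pair_reps r n)) \<le> sigma 0 n"
proof (cases r)
  case 0 then show ?thesis using assms(1) by (simp add: pair_reps_0 sigma_0_eq_card)
next
  case (Suc r')
  hence "r = 1" using assms(2) by simp
  thus ?thesis using card_pair_reps_1_le[OF assms(1)] by (simp add: sigma_0_eq_card)
qed

lemma card_pair_reps_le_sigma_1_ln:
  assumes "n \<ge> 3" "r \<le> 2"
  shows "real (card (pair_reps r n)) \<le> 20 * (sigma 1 n * ln (real n) ^ 2)"
proof -
  define l where "l = ln (real n)"
  have n: "n > 0" and l: "1 \<le> l" using assms(1) one_le_ln_nat unfolding l_def by auto
  have "1 \<le> l ^ 2" using l by simp
  have "real n \<le> sigma 1 n" using power_le_sigma[OF n, of 1] by simp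
  hence "1 \<le> sigma 1 n" using n by linarith
  show ?thesis
  proof (cases "r = 2")
    case True
    have "harm n ^ 2 \<le> (2 * l) ^ 2"
      using harm_le_2_ln[OF assms(1)] unfolding l_def by (intro power_mono) (auto simp: harm_nonneg)
    moreover have "sigma 1 n * 1 \<le> sigma 1 n * l ^ 2"
      using \<open>1 \<le> l ^ 2\<close> by (intro mult_left_mono) (simp_all add: sigma_nonneg)
    ultimately have "harm n ^ 2 * sigma 1 n + real n \<le> (2 * l) ^ 2 * sigma 1 n + sigma 1 n * l ^ 2"
      using \<open>real n \<le> sigma 1 n\<close> by (intro add_mono mult_right_mono) (auto simp: sigma_nonneg)
    moreover have "real (card (pair_reps r n)) \<le> 4 * (harm n ^ 2 * sigma 1 n + real n)"
      using card_pair_reps_2_le[of n] True unfolding div_recip_sum_eq_sigma_1[OF n, symmetric]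
      by (simp add: algebra_simps)
    ultimately show ?thesis unfolding l_def by (simp add: power_mult_distrib)
  next
    case False
    hence "r \<le> 1" using assms(2) by simp
    have "real (card (pair_reps r n)) \<le> sigma 0 n" by (rule card_pair_reps_le_sigma_0[OF n \<open>r \<le> 1\<close>])
    also have "\<dots> \<le> sigma 1 n" by (rule sigma_mono[OF n]) simp
    also have "\<dots> \<le> 20 * (sigma 1 n * l ^ 2)" using \<open>1 \<le> l ^ 2\<close> \<open>1 \<le> sigma 1 n\<close> by simp
    finally show ?thesis unfolding l_def .
  qed
qed

lemma card_pair_reps_le_power_ln:
  assumes "n \<ge> 3" "r \<ge> 3"
  shows "real (card (pair_reps r n)) \<le> 24 * 2 ^ r * (real n ^ (r - 1) * ln (real n) ^ r)"
proof -
  have "real (card (pair_reps r n)) \<le> 24 * real n ^ (r - 1) * harm n ^ r"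
    by (rule card_pair_reps_le[OF assms(2)])
  also have "\<dots> \<le> 24 * real n ^ (r - 1) * (2 * ln (real n)) ^ r"
    using harm_le_2_ln[OF assms(1)] by (intro mult_left_mono power_mono) (auto simp: harm_nonneg)
  finally show ?thesis by (simp add: power_mult_distrib algebra_simps)
qed

lemma card_pair_reps_le_sigma_ln:
  assumes n: "n \<ge> 3" and j: "2 \<le> j" "r \<le> j"
  shows "real (card (pair_reps r n)) \<le> 24 * 2 ^ j * (sigma (j - 1) n * ln (real n) ^ j)"
proof -
  define l where "l = ln (real n)"
  have l: "1 \<le> l" using n one_le_ln_nat unfolding l_def by auto
  have "l ^ r \<le> l ^ j" "l ^ 2 \<le> l ^ j" using l j by (auto intro: power_increasing)
  have "real n ^ (j - 1) \<le> sigma (j - 1) n" using n by (intro power_le_sigma) auto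
  show ?thesis
  proof (cases "r \<le> 2")
    case True
    have "sigma 1 n \<le> sigma (j - 1) n" using n j by (intro sigma_mono) auto
    moreover have "(20 :: real) \<le> 24 * 2 ^ j" using one_le_power[of "2 :: real" j] by linarith
    ultimately have "20 * (sigma 1 n * l ^ 2) \<le> 24 * 2 ^ j * (sigma (j - 1) n * l ^ j)"
      using \<open>l ^ 2 \<le> l ^ j\<close> l by (intro mult_mono) (auto simp: sigma_nonneg)
    thus ?thesis using card_pair_reps_le_sigma_1_ln[OF n True] unfolding l_def by linarith
  next
    case False
    have "real n ^ (r - 1) \<le> real n ^ (j - 1)" using n j by (intro power_increasing) auto
    moreover have "(2 :: real) ^ r \<le> 2 ^ j" using j by (intro power_increasing) auto
    ultimately have "24 * 2 ^ r * (real n ^ (r - 1) * l ^ r) \<le> 24 * 2 ^ j * (sigma (j - 1) n * l ^ j)"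
      using \<open>l ^ r \<le> l ^ j\<close> \<open>real n ^ (j - 1) \<le> sigma (j - 1) n\<close> l
      by (intro mult_mono mult_left_mono) (auto simp: sigma_nonneg)
    moreover have "r \<ge> 3" using False by simp
    ultimately show ?thesis using card_pair_reps_le_power_ln[OF n] unfolding l_def by fastforce
  qed
qed

lemma card_pair_reps_bigo_sigma_0:
  assumes "r \<le> 1"
  shows "(\<lambda>n. real (card (pair_reps r n))) \<in> O(\<lambda>n. sigma 0 n)"
proof (intro landau_o.big_mono eventually_mono[OF eventually_gt_at_top[of 0]])
  fix n :: nat assume "n > 0"
  thus "norm (real (card (pair_reps r n))) \<le> norm (sigma 0 n)"
    using card_pair_reps_le_sigma_0[OF _ assms] sigma_nonneg[of 0 n] by simp
qed

lemma card_pair_reps_bigo_sigma_ln: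
  assumes "2 \<le> j" "r \<le> j"
  shows "(\<lambda>n. real (card (pair_reps r n))) \<in> O(\<lambda>n. sigma (j - 1) n * ln (real n) ^ j)"
proof (rule bigoI)
  show "\<forall>\<^sub>F n in at_top. norm (real (card (pair_reps r n)))
      \<le> 24 * 2 ^ j * norm (sigma (j - 1) n * ln (real n) ^ j)"
  proof (rule eventually_mono[OF eventually_ge_at_top[of 3]])
    fix n :: nat assume n: "3 \<le> n"
    have "0 \<le> sigma (j - 1) n * ln (real n) ^ j" using n by (simp add: sigma_nonneg)
    thus "norm (real (card (pair_reps r n))) \<le> 24 * 2 ^ j * norm (sigma (j - 1) n * ln (real n) ^ j)"
      using card_pair_reps_le_sigma_ln[OF n assms] by simp
  qed
qed

lemma card_Av_diff_D_bigo:
  assumes "strict_partition \<mu>" "\<mu> \<noteq> []"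
    and "\<And>r. r \<le> hd \<mu> - 2 \<Longrightarrow> (\<lambda>n. real (card (pair_reps r n))) \<in> O(f)"
  shows "(\<lambda>n. real (card (Av n \<mu> - D n \<mu>))) \<in> O(f)"
proof -
  have "(\<lambda>n. real (card (Av n \<mu> - D n \<mu>))) \<in> O(\<lambda>n. \<Sum>r\<le>hd \<mu> - 2. real (card (pair_reps r n)))"
  proof (intro landau_o.big_mono eventually_mono[OF eventually_gt_at_top[of 0]])
    fix n :: nat assume "n > 0"
    from card_Av_diff_D_le[OF assms(1,2) this]
    show "norm (real (card (Av n \<mu> - D n \<mu>))) \<le> norm (\<Sum>r\<le>hd \<mu> - 2. real (card (pair_reps r n)))"
      by (simp flip: of_nat_sum)
  qed
  also have "(\<lambda>n. \<Sum>r\<le>hd \<mu> - 2. real (card (pair_reps r n))) \<in> O(f)"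
    using assms(3) by (intro big_sum_in_bigo) auto
  finally show ?thesis .
qed

theorem mainTheorem15:
  fixes \<mu> :: "nat list" and k :: nat
  assumes "strict_partition \<mu>" and "\<mu> \<noteq> []" and "hd \<mu> > 1" and "k = hd \<mu> - 1"
  shows "(k = 2 \<longrightarrow>
           (\<lambda>n. real (card (Av n \<mu> - D n \<mu>))) \<in> O(\<lambda>n. sigma 0 n))
       \<and> (k \<ge> 3 \<longrightarrow>
           (\<lambda>n. real (card (Av n \<mu> - D n \<mu>))) \<in> O(\<lambda>n. sigma (k - 2) n * ln (real n) ^ (k - 1)))"
proof (intro conjI impI)
  assume "k = 2"
  thus "(\<lambda>n. real (card (Av n \<mu> - D n \<mu>))) \<in> O(\<lambda>n. sigma 0 n)"
    using assms by (intro card_Av_diff_D_bigo card_pair_reps_bigo_sigma_0) auto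
next
  assume "k \<ge> 3"
  hence j: "2 \<le> k - 1" "hd \<mu> - 2 = k - 1" and "k - 2 = k - 1 - 1" using assms(4) by auto
  show "(\<lambda>n. real (card (Av n \<mu> - D n \<mu>))) \<in> O(\<lambda>n. sigma (k - 2) n * ln (real n) ^ (k - 1))"
    unfolding \<open>k - 2 = k - 1 - 1\<close>
  proof (rule card_Av_diff_D_bigo[OF assms(1,2)])
    fix r assume "r \<le> hd \<mu> - 2"
    with j show "(\<lambda>n. real (card (pair_reps r n))) \<in> O(\<lambda>n. sigma (k - 1 - 1) n * ln (real n) ^ (k - 1))"
      by (intro card_pair_reps_bigo_sigma_ln) auto
  qed
qed

end
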